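(* Let $H$ be a separable infinite-dimensional Hilbert space and let $\Phi:\mathcal{T}(H)\to\mathcal{T}(H)$ be the channel $\Phi(X)=\sum_{k=1}^\infty u_kv_k^*Xv_ku_k^*=\sum_{k=1}^\infty E_kXE_k^*$, where $E_k=u_kv_k^*$, $u_k,v_k\in H$, $\|u_k\|=1$ for all $k$, and $\sum_{k=1}^\infty v_kv_k^*=I_H$. Let $\mathcal{M}_\Phi=\{A\in\mathcal{T}(H):\Phi(AX)=\Phi(A)\Phi(X)\text{ and }\Phi(XA)=\Phi(X)\Phi(A)\text{ for all }X\in\mathcal{T}(H)\}$ be its multiplicative domain. If an orthogonal projection $P$ lies in $\mathcal{M}_\Phi$, then every $v_k$ is an eigenvector of $P$. Moreover, any two orthogonal projections in $\mathcal{M}_\Phi$ commute.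
   Context: $\mathcal{T}(H)$ denotes the trace-class operators on $H$. (Channels of the given form are exactly the strongly entanglement breaking channels on $\mathcal{T}(H)$.) *)

theory Defs
  imports "HOL-Analysis.Analysis"
begin

text \<open>The distribution has no complex Hilbert spaces, so we introduce the standard
axioms: a complex vector space (whose real scalar multiplication is the restriction
of the complex one) with a sesquilinear inner product, conjugate-linear in the first
argument and linear in the second, inducing the norm.\<close>

class complex_inner = real_normed_vector +
  fixes scaleC :: "complex \<Rightarrow> 'a \<Rightarrow> 'a" (infixr \<open>*\<^sub>C\<close> 75)
    and cinner :: "'a \<Rightarrow> 'a \<Rightarrow> complex"
  assumes scaleC_add_right: "a *\<^sub>C (x + y) = a *\<^sub>C x + a *\<^sub>C y"
    and scaleC_add_left: "(a + b) *\<^sub>C x = a *\<^sub>C x + b *\<^sub>C x"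
    and scaleC_scaleC: "a *\<^sub>C (b *\<^sub>C x) = (a * b) *\<^sub>C x"
    and scaleC_one: "1 *\<^sub>C x = x"
    and scaleR_scaleC: "scaleR r x = complex_of_real r *\<^sub>C x"
    and cinner_commute: "cinner x y = cnj (cinner y x)"
    and cinner_add_right: "cinner x (y + z) = cinner x y + cinner x z"
    and cinner_scaleC_right: "cinner x (a *\<^sub>C y) = a * cinner x y"
    and cinner_self_nonneg: "Im (cinner x x) = 0 \<and> Re (cinner x x) \<ge> 0"
    and norm_eq_sqrt_cinner: "norm x = sqrt (Re (cinner x x))"

class chilbert_space = complex_inner + complete_space

definition separable_type :: "'a::topological_space itself \<Rightarrow> bool" where
  "separable_type _ \<longleftrightarrow> (\<exists>D::'a set. countable D \<and> closure D = UNIV)"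

definition cindependent :: "'a::complex_inner set \<Rightarrow> bool" where
  "cindependent S \<longleftrightarrow> (\<forall>T c. finite T \<and> T \<subseteq> S \<and> (\<Sum>x\<in>T. c x *\<^sub>C x) = 0
      \<longrightarrow> (\<forall>x\<in>T. c x = 0))"

definition infinite_dimensional :: "'a::complex_inner itself \<Rightarrow> bool" where
  "infinite_dimensional _ \<longleftrightarrow> (\<exists>S::'a set. infinite S \<and> cindependent S)"

definition clinear :: "('a::complex_inner \<Rightarrow> 'b::complex_inner) \<Rightarrow> bool" where
  "clinear f \<longleftrightarrow> (\<forall>x y. f (x + y) = f x + f y) \<and> (\<forall>a x. f (a *\<^sub>C x) = a *\<^sub>C f x)"

text \<open>Rank-one operator u v^*, i.e. x |-> <v,x> u.\<close>
definition rank1 :: "'a::complex_inner \<Rightarrow> 'a \<Rightarrow> 'a \<Rightarrow> 'a" where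
  "rank1 u v = (\<lambda>x. cinner v x *\<^sub>C u)"

text \<open>Trace-class operators, defined as nuclear operators:
  T x = Sum_n <b_n,x> a_n with Sum_n ||a_n|| ||b_n|| < oo
  (on a Hilbert space these are exactly the trace-class operators).\<close>
definition trace_class :: "('a::complex_inner \<Rightarrow> 'a) \<Rightarrow> bool" where
  "trace_class T \<longleftrightarrow> (\<exists>a b :: nat \<Rightarrow> 'a.
      summable (\<lambda>n. norm (a n) * norm (b n)) \<and>
      (\<forall>x. (\<lambda>n. cinner (b n) x *\<^sub>C a n) sums T x))"

definition orth_proj :: "('a::complex_inner \<Rightarrow> 'a) \<Rightarrow> bool" where
  "orth_proj P \<longleftrightarrow> clinear P \<and> P \<circ> P = P \<and> (\<forall>x y. cinner (P x) y = cinner x (P y))"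

definition is_eigenvector :: "('a::complex_inner \<Rightarrow> 'a) \<Rightarrow> 'a \<Rightarrow> bool" where
  "is_eigenvector T x \<longleftrightarrow> x \<noteq> 0 \<and> (\<exists>c. T x = c *\<^sub>C x)"

text \<open>Phi(X) = Sum_k E_k X E_k^* with E_k = u_k v_k^*, the series taken
  pointwise (it converges in trace norm for trace-class X, hence also pointwise).\<close>
definition channel :: "(nat \<Rightarrow> 'a::complex_inner) \<Rightarrow> (nat \<Rightarrow> 'a) \<Rightarrow> ('a \<Rightarrow> 'a) \<Rightarrow> ('a \<Rightarrow> 'a)" where
  "channel u v X = (\<lambda>x. \<Sum>k. (rank1 (u k) (v k) \<circ> X \<circ> rank1 (v k) (u k)) x)"

definition mult_domain :: "(('a::complex_inner \<Rightarrow> 'a) \<Rightarrow> ('a \<Rightarrow> 'a)) \<Rightarrow> ('a \<Rightarrow> 'a) set" where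
  "mult_domain \<Phi> = {A. trace_class A \<and> (\<forall>X. trace_class X \<longrightarrow>
      \<Phi> (A \<circ> X) = \<Phi> A \<circ> \<Phi> X \<and> \<Phi> (X \<circ> A) = \<Phi> X \<circ> \<Phi> A)}"

end

theory Submission
  imports Defs
begin

text \<open>In terms of the Parseval frame \<open>(v\<^sub>k)\<close> the channel acts as
\<open>\<Phi>(X) x = \<Sum>\<^sub>k \<langle>v\<^sub>k, X v\<^sub>k\<rangle> \<langle>u\<^sub>k, x\<rangle> u\<^sub>k\<close>, so for positive \<open>X\<close> the quadratic form
\<open>\<langle>x, \<Phi>(X) x\<rangle> = \<Sum>\<^sub>k \<langle>v\<^sub>k, X v\<^sub>k\<rangle> |\<langle>u\<^sub>k, x\<rangle>|\<^sup>2\<close> is a sum of nonnegative terms.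
Let \<open>P\<close> be a projection in the multiplicative domain and \<open>P y = 0\<close>. Then
\<open>\<Phi>(P) \<Phi>(y y\<^sup>*) = \<Phi>(P y y\<^sup>*) = 0\<close>; evaluating the quadratic form of \<open>\<Phi>(P)\<close> at
\<open>\<Phi>(y y\<^sup>*) u\<^sub>k\<close> and then that of \<open>\<Phi>(y y\<^sup>*)\<close> at \<open>u\<^sub>k\<close> shows \<open>\<langle>v\<^sub>k, y\<rangle> = 0\<close> whenever
\<open>P v\<^sub>k \<noteq> 0\<close>. So every \<open>v\<^sub>k\<close> lies in the kernel or in the range of \<open>P\<close>, and two such
projections, being simultaneously diagonal on a Parseval frame, commute.\<close>

lemma cinner_add_left: "cinner (x + y) (z::'a::complex_inner) = cinner x z + cinner y z"
  by (metis cinner_commute cinner_add_right complex_cnj_add)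

lemma cinner_scaleC_left: "cinner (a *\<^sub>C x) (y::'a::complex_inner) = cnj a * cinner x y"
  by (metis cinner_commute cinner_scaleC_right complex_cnj_mult complex_cnj_cnj)

lemma cinner_zero_right [simp]: "cinner (x::'a::complex_inner) 0 = 0"
  using cinner_add_right[of x 0 0] by simp

lemma cinner_zero_left [simp]: "cinner 0 (x::'a::complex_inner) = 0"
  by (metis cinner_commute cinner_zero_right complex_cnj_zero)

lemma scaleC_zero_left [simp]: "0 *\<^sub>C (x::'a::complex_inner) = 0"
  using scaleC_add_left[of 0 0 x] by simp

lemma scaleC_zero_right [simp]: "a *\<^sub>C (0::'a::complex_inner) = 0"
  using scaleC_add_right[of a 0 0] by simp

lemma scaleC_minus1_left: "(-1) *\<^sub>C x = - (x::'a::complex_inner)"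
  using scaleR_scaleC[of "-1" x] by simp

lemma cinner_diff_right: "cinner x ((y::'a::complex_inner) - z) = cinner x y - cinner x z"
  using cinner_add_right[of x y "(-1) *\<^sub>C z"] cinner_scaleC_right[of x "-1" z]
  by (simp add: scaleC_minus1_left)

lemma cinner_diff_left: "cinner ((y::'a::complex_inner) - z) x = cinner y x - cinner z x"
  by (metis cinner_commute cinner_diff_right complex_cnj_diff)

lemma cinner_self: "cinner (x::'a::complex_inner) x = complex_of_real ((norm x)\<^sup>2)"
  using cinner_self_nonneg[of x] norm_eq_sqrt_cinner[of x] by (simp add: complex_eq_iff)

lemma cinner_self_eq_0: "cinner (x::'a::complex_inner) x = 0 \<longleftrightarrow> x = 0"
  by (simp add: cinner_self)

lemma cinner_mult_cinner_commute:
  "cinner (x::'a::complex_inner) y * cinner y x = complex_of_real ((cmod (cinner x y))\<^sup>2)"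
  using complex_norm_square[of "cinner x y"] cinner_commute[of y x] by simp

lemma norm_scaleC: "norm (a *\<^sub>C (x::'a::complex_inner)) = cmod a * norm x"
proof -
  have "complex_of_real ((norm (a *\<^sub>C x))\<^sup>2) = cnj a * a * complex_of_real ((norm x)\<^sup>2)"
    by (metis cinner_self cinner_scaleC_left cinner_scaleC_right mult.assoc)
  also have "cnj a * a = complex_of_real ((cmod a)\<^sup>2)"
    by (metis complex_norm_square mult.commute of_real_power)
  finally have "(norm (a *\<^sub>C x))\<^sup>2 = (cmod a * norm x)\<^sup>2"
    by (metis of_real_eq_iff of_real_mult power_mult_distrib)
  then show ?thesis by (simp add: power2_eq_iff_nonneg)
qed

lemma cinner_cauchy_schwarz: "cmod (cinner x y) \<le> norm x * norm (y::'a::complex_inner)"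
proof (cases "y = 0")
  case True
  then show ?thesis by simp
next
  case False
  define p where "p = cinner y x"
  define R where "R = (norm y)\<^sup>2"
  have R: "R > 0" using False by (simp add: R_def)
  define s where "s = - p / complex_of_real R"
  have xy: "cinner x y = cnj p" by (simp add: p_def cinner_commute[of x y])
  \<comment> \<open>expand \<open>0 \<le> \<parallel>x + s y\<parallel>\<^sup>2\<close> at the minimising \<open>s\<close>\<close>
  have "cinner (x + s *\<^sub>C y) (x + s *\<^sub>C y)
      = cinner x x + s * cnj p + cnj s * p + cnj s * s * complex_of_real R"
    by (simp add: cinner_add_left cinner_add_right cinner_scaleC_left cinner_scaleC_right xy
        p_def[symmetric] R_def cinner_self[of y] algebra_simps)
  also have "\<dots> = cinner x x - complex_of_real ((cmod p)\<^sup>2 / R)"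
    using R by (simp add: s_def field_simps complex_norm_square)
      (simp add: algebra_simps complex_norm_square[symmetric])
  finally have "0 \<le> (norm x)\<^sup>2 - (cmod p)\<^sup>2 / R"
    by (metis Re_complex_of_real cinner_self of_real_diff norm_ge_zero zero_le_power2)
  then have "(cmod p)\<^sup>2 \<le> (norm x * norm y)\<^sup>2"
    using R by (simp add: R_def field_simps power_mult_distrib)
  then have "cmod p \<le> norm x * norm y" by (rule power2_le_imp_le) simp
  then show ?thesis by (simp add: xy)
qed

lemma bounded_linear_cinner_right: "bounded_linear (cinner (x::'a::complex_inner))"
proof (rule bounded_linear_intro[where K = "norm x"])
  show "cinner x (y + z) = cinner x y + cinner x z" for y z
    by (rule cinner_add_right)
  show "cinner x (r *\<^sub>R y) = r *\<^sub>R cinner x y" for r y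
    by (simp add: scaleR_scaleC cinner_scaleC_right scaleR_conv_of_real)
  show "norm (cinner x y) \<le> norm y * norm x" for y
    using cinner_cauchy_schwarz[of x y] by (simp add: mult.commute)
qed

lemma sums_cinner_right: "f sums s \<Longrightarrow> (\<lambda>n. cinner (x::'a::complex_inner) (f n)) sums cinner x s"
  by (rule bounded_linear.sums[OF bounded_linear_cinner_right])

context chilbert_space begin
subclass banach ..
end

lemma clinear_scaleC: "clinear T \<Longrightarrow> T (a *\<^sub>C x) = a *\<^sub>C T x"
  by (simp add: clinear_def)

lemma clinear_zero: "clinear (T::'a::complex_inner \<Rightarrow> 'b::complex_inner) \<Longrightarrow> T 0 = 0"
  using clinear_scaleC[of T 0 0] by simp

lemma clinear_diff:
  "clinear (T::'a::complex_inner \<Rightarrow> 'b::complex_inner) \<Longrightarrow> T (x - y) = T x - T y"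
  unfolding clinear_def by (metis diff_conv_add_uminus scaleC_minus1_left)

lemma clinear_comp: "clinear S \<Longrightarrow> clinear T \<Longrightarrow> clinear (S \<circ> T)"
  by (simp add: clinear_def)

lemma rank1_clinear: "clinear (rank1 (y::'a::complex_inner) z)"
  by (simp add: clinear_def rank1_def cinner_add_right scaleC_add_left cinner_scaleC_right
      scaleC_scaleC)

lemma rank1_trace_class: "trace_class (rank1 (y::'a::complex_inner) z)"
  unfolding trace_class_def
proof (intro exI conjI allI)
  let ?a = "\<lambda>n::nat. if n = 0 then y else 0" and ?b = "\<lambda>n::nat. if n = 0 then z else 0"
  have "(\<lambda>n. norm (?a n) * norm (?b n)) = (\<lambda>n. if n = 0 then norm y * norm z else 0)"
    by auto
  then show "summable (\<lambda>n. norm (?a n) * norm (?b n))"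
    by (simp add: summable_If_finite_set)
  have "(\<lambda>n. cinner (?b n) x *\<^sub>C ?a n) = (\<lambda>n. if n = 0 then cinner z x *\<^sub>C y else 0)" for x
    by auto
  then show "(\<lambda>n. cinner (?b n) x *\<^sub>C ?a n) sums rank1 y z x" for x
    using sums_single[of 0 "\<lambda>_. cinner z x *\<^sub>C y"] by (simp add: rank1_def)
qed

lemma orth_proj_clinear: "orth_proj P \<Longrightarrow> clinear P"
  by (simp add: orth_proj_def)

lemma orth_proj_idem: "orth_proj P \<Longrightarrow> P (P x) = P x"
  by (metis comp_apply orth_proj_def)

lemma orth_proj_adjoint: "orth_proj P \<Longrightarrow> cinner (P x) y = cinner x (P y)"
  by (simp add: orth_proj_def)

lemma orth_proj_cinner_self: "orth_proj P \<Longrightarrow> cinner x (P x) = complex_of_real ((norm (P x))\<^sup>2)"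
  by (metis cinner_self orth_proj_adjoint orth_proj_idem)

lemma orth_proj_norm_le: "orth_proj (P::'a::complex_inner \<Rightarrow> 'a) \<Longrightarrow> norm (P x) \<le> norm x"
proof -
  assume P: "orth_proj P"
  have "norm (P x) * norm (P x) = cmod (cinner x (P x))"
    by (simp add: orth_proj_cinner_self[OF P] norm_mult norm_power power2_eq_square)
  also have "\<dots> \<le> norm x * norm (P x)" by (rule cinner_cauchy_schwarz)
  finally show ?thesis
    by (cases "P x = 0") (simp_all add: mult_le_cancel_right)
qed

lemma orth_proj_bounded_linear: "orth_proj (P::'a::complex_inner \<Rightarrow> 'a) \<Longrightarrow> bounded_linear P"
proof -
  assume P: "orth_proj P"
  then have L: "clinear P" by (rule orth_proj_clinear)
  show ?thesis
  proof (rule bounded_linear_intro[where K = 1])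
    show "P (x + y) = P x + P y" for x y
      using L by (simp add: clinear_def)
    show "P (r *\<^sub>R x) = r *\<^sub>R P x" for r x
      by (simp add: scaleR_scaleC clinear_scaleC[OF L])
    show "norm (P x) \<le> norm x * 1" for x
      using orth_proj_norm_le[OF P] by simp
  qed
qed

lemma orth_proj_fixes_if_orthogonal_to_kernel:
  assumes P: "orth_proj P" and ker: "\<And>y. P y = 0 \<Longrightarrow> cinner x y = 0"
  shows "P x = x"
proof -
  define w where "w = x - P x"
  have Pw: "P w = 0"
    by (simp add: w_def clinear_diff[OF orth_proj_clinear[OF P]] orth_proj_idem[OF P])
  have "cinner w w = cinner x w - cinner x (P w)"
    by (simp add: w_def cinner_diff_left orth_proj_adjoint[OF P])
  also have "\<dots> = 0" by (simp add: ker[OF Pw] Pw)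
  finally show ?thesis by (simp add: cinner_self_eq_0 w_def)
qed

definition parseval_frame :: "(nat \<Rightarrow> 'a::complex_inner) \<Rightarrow> bool" where
  "parseval_frame v \<longleftrightarrow> (\<forall>x. (\<lambda>k. rank1 (v k) (v k) x) sums x)"

lemma parseval_frame_sums: "parseval_frame v \<Longrightarrow> (\<lambda>k. cinner (v k) x *\<^sub>C v k) sums x"
  by (simp add: parseval_frame_def rank1_def)

lemma parseval_frame_sums_norm:
  assumes "parseval_frame v"
  shows "(\<lambda>k. (cmod (cinner (v k) x))\<^sup>2) sums (norm x)\<^sup>2"
proof -
  have "(\<lambda>k. cinner x (cinner (v k) x *\<^sub>C v k)) sums cinner x x"
    using sums_cinner_right[OF parseval_frame_sums[OF assms]] .
  then have "(\<lambda>k. complex_of_real ((cmod (cinner (v k) x))\<^sup>2)) sums complex_of_real ((norm x)\<^sup>2)"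
    by (simp add: cinner_scaleC_right cinner_mult_cinner_commute cinner_self)
  from sums_Re[OF this] show ?thesis by simp
qed

lemma parseval_frame_sum_le:
  assumes "parseval_frame v" and "finite A"
  shows "(\<Sum>k\<in>A. (cmod (cinner (v k) x))\<^sup>2) \<le> (norm x)\<^sup>2"
proof -
  note sums = parseval_frame_sums_norm[OF assms(1), of x]
  show ?thesis
    using sum_le_suminf[OF sums_summable[OF sums] assms(2)] sums_unique[OF sums] by simp
qed

lemma parseval_frame_sum_cinner_le:
  assumes v: "parseval_frame v" and A: "finite A"
  shows "(\<Sum>k\<in>A. cmod (cinner x (v k)) * cmod (cinner (v k) y)) \<le> norm x * norm y"
proof -
  have L2_le: "L2_set (\<lambda>k. cmod (cinner (v k) z)) A \<le> norm z" for z
    unfolding L2_set_def using real_sqrt_le_mono[OF parseval_frame_sum_le[OF v A, of z]] by simp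
  have "(\<Sum>k\<in>A. cmod (cinner x (v k)) * cmod (cinner (v k) y))
      = (\<Sum>k\<in>A. \<bar>cmod (cinner (v k) x)\<bar> * \<bar>cmod (cinner (v k) y)\<bar>)"
    by (intro sum.cong refl) (simp add: cinner_commute[of x "v k" for k])
  also have "\<dots> \<le> L2_set (\<lambda>k. cmod (cinner (v k) x)) A * L2_set (\<lambda>k. cmod (cinner (v k) y)) A"
    by (rule L2_set_mult_ineq)
  also have "\<dots> \<le> norm x * norm y"
    by (intro mult_mono L2_le) simp_all
  finally show ?thesis .
qed

lemma parseval_frame_apply_sums:
  assumes v: "parseval_frame v" and "clinear T" and "bounded_linear T"
  shows "(\<lambda>k. cinner (v k) x *\<^sub>C T (v k)) sums T x"
  using bounded_linear.sums[OF assms(3) parseval_frame_sums[OF v]]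
  by (simp add: clinear_scaleC[OF assms(2)])

lemma trace_class_summable_diagonal:
  fixes v :: "nat \<Rightarrow> 'a::complex_inner"
  assumes v: "parseval_frame v" and T: "trace_class T"
  shows "summable (\<lambda>k. norm (cinner (v k) (T (v k))))"
proof -
  obtain a b :: "nat \<Rightarrow> 'a" where ab: "summable (\<lambda>n. norm (a n) * norm (b n))"
    and Tab: "\<And>x. (\<lambda>n. cinner (b n) x *\<^sub>C a n) sums T x"
    using T unfolding trace_class_def by blast
  define t where "t n k = cmod (cinner (b n) (v k)) * cmod (cinner (v k) (a n))" for n k
  have t_summable: "summable (\<lambda>n. t n k)" for k
  proof (rule summable_comparison_test[OF _ summable_mult[OF ab, of "(norm (v k))\<^sup>2"]])
    have "t n k \<le> (norm (b n) * norm (v k)) * (norm (v k) * norm (a n))" for n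
      unfolding t_def by (intro mult_mono cinner_cauchy_schwarz) auto
    then show "\<exists>N. \<forall>n\<ge>N. norm (t n k) \<le> (norm (v k))\<^sup>2 * (norm (a n) * norm (b n))"
      by (auto simp: t_def power2_eq_square algebra_simps)
  qed
  have diagonal_le: "norm (cinner (v k) (T (v k))) \<le> (\<Sum>n. t n k)" for k
  proof -
    have "(\<lambda>n. cinner (b n) (v k) * cinner (v k) (a n)) sums cinner (v k) (T (v k))"
      using sums_cinner_right[OF Tab] by (simp add: cinner_scaleC_right)
    then show ?thesis
      using summable_norm[of "\<lambda>n. cinner (b n) (v k) * cinner (v k) (a n)"] t_summable[of k]
      by (simp add: sums_iff t_def norm_mult)
  qed
  show ?thesis
  proof (rule bounded_imp_summable)
    fix N
    have "(\<Sum>k\<le>N. norm (cinner (v k) (T (v k)))) \<le> (\<Sum>k\<le>N. \<Sum>n. t n k)"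
      by (intro sum_mono diagonal_le)
    also have "\<dots> = (\<Sum>n. \<Sum>k\<le>N. t n k)"
      by (rule suminf_sum[symmetric]) (rule t_summable)
    also have "\<dots> \<le> (\<Sum>n. norm (a n) * norm (b n))"
    proof (intro suminf_le summable_sum t_summable ab)
      show "(\<Sum>k\<le>N. t n k) \<le> norm (a n) * norm (b n)" for n
        using parseval_frame_sum_cinner_le[OF v, of "{..N}" "b n" "a n"]
        by (simp add: t_def mult.commute)
    qed
    finally show "(\<Sum>k\<le>N. norm (cinner (v k) (T (v k)))) \<le> (\<Sum>n. norm (a n) * norm (b n))" .
  qed simp
qed

lemma channel_sums:
  fixes u v :: "nat \<Rightarrow> 'a::chilbert_space"
  assumes X: "clinear X" and u: "\<forall>k. norm (u k) = 1"
    and diagonal: "summable (\<lambda>k. norm (cinner (v k) (X (v k))))"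
  shows "(\<lambda>k. (cinner (u k) x * cinner (v k) (X (v k))) *\<^sub>C u k) sums channel u v X x"
proof -
  have "norm ((cinner (u k) x * cinner (v k) (X (v k))) *\<^sub>C u k)
      \<le> norm x * norm (cinner (v k) (X (v k)))" for k
    using cinner_cauchy_schwarz[of "u k" x] u
    by (simp add: norm_scaleC norm_mult mult_right_mono)
  then have "summable (\<lambda>k. (cinner (u k) x * cinner (v k) (X (v k))) *\<^sub>C u k)"
    by (intro summable_comparison_test[OF _ summable_mult[OF diagonal]]) auto
  moreover have "(rank1 (u k) (v k) \<circ> X \<circ> rank1 (v k) (u k)) x
      = (cinner (u k) x * cinner (v k) (X (v k))) *\<^sub>C u k" for k
    by (simp add: rank1_def clinear_scaleC[OF X] cinner_scaleC_right)
  ultimately show ?thesis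
    by (simp add: channel_def summable_sums)
qed

lemma channel_quadratic_form_eq_0_imp:
  fixes u v :: "nat \<Rightarrow> 'a::chilbert_space"
  assumes X: "clinear X" and u: "\<forall>k. norm (u k) = 1"
    and diagonal: "\<And>k. cinner (v k) (X (v k)) = complex_of_real (d k)"
    and d: "summable d" "\<And>k. d k \<ge> 0"
    and zero: "cinner x (channel u v X x) = 0"
  shows "d k * (cmod (cinner (u k) x))\<^sup>2 = 0"
proof -
  have "summable (\<lambda>k. norm (cinner (v k) (X (v k))))"
    using d by (simp add: diagonal)
  from sums_cinner_right[OF channel_sums[OF X u this, of x], of x]
  have "(\<lambda>k. complex_of_real (d k * (cmod (cinner (u k) x))\<^sup>2)) sums 0"
    using cinner_mult_cinner_commute[of x "u _"]
    by (simp add: zero diagonal cinner_scaleC_right cinner_commute[of x "u _"] algebra_simps)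
  from sums_Re[OF this] have "(\<lambda>k. d k * (cmod (cinner (u k) x))\<^sup>2) sums 0"
    by simp
  then show ?thesis
    using suminf_eq_zero_iff[of "\<lambda>k. d k * (cmod (cinner (u k) x))\<^sup>2"] d(2)
    by (simp add: sums_iff)
qed

lemma mult_domain_orth_proj_kernel_orthogonal:
  fixes u v :: "nat \<Rightarrow> 'a::chilbert_space"
  assumes u: "\<forall>k. norm (u k) = 1" and v: "parseval_frame v"
    and P: "orth_proj P" and M: "P \<in> mult_domain (channel u v)"
    and Pv: "P (v k) \<noteq> 0" and Py: "P y = 0"
  shows "cinner (v k) y = 0"
proof -
  define Y where "Y = rank1 y y"
  have "trace_class P" and mult: "channel u v (P \<circ> Y) = channel u v P \<circ> channel u v Y"
    using M rank1_trace_class[of y y] by (auto simp: mult_domain_def Y_def)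
  have "P \<circ> Y = (\<lambda>x. 0)"
    by (auto simp: Y_def rank1_def clinear_scaleC[OF orth_proj_clinear[OF P]] Py)
  then have PY: "channel u v P (channel u v Y x) = 0" for x
    using fun_cong[OF mult, of x] by (simp add: channel_def rank1_def)
  have diagonal_P: "cinner (v j) (P (v j)) = complex_of_real ((norm (P (v j)))\<^sup>2)" for j
    by (rule orth_proj_cinner_self[OF P])
  have diagonal_Y: "cinner (v j) (Y (v j)) = complex_of_real ((cmod (cinner y (v j)))\<^sup>2)" for j
    by (simp add: Y_def rank1_def cinner_scaleC_right cinner_mult_cinner_commute)
  have "summable (\<lambda>j. (norm (P (v j)))\<^sup>2)"
    using trace_class_summable_diagonal[OF v \<open>trace_class P\<close>] by (simp add: diagonal_P norm_power)
  from channel_quadratic_form_eq_0_imp[OF orth_proj_clinear[OF P] u diagonal_P this]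
  have "(norm (P (v k)))\<^sup>2 * (cmod (cinner (u k) (channel u v Y (u k))))\<^sup>2 = 0"
    by (simp add: PY)
  then have "cinner (u k) (channel u v Y (u k)) = 0"
    using Pv by simp
  moreover have "summable (\<lambda>j. (cmod (cinner y (v j)))\<^sup>2)"
    using trace_class_summable_diagonal[OF v rank1_trace_class[of y y]]
    by (simp add: diagonal_Y[unfolded Y_def] norm_power)
  ultimately have "(cmod (cinner y (v k)))\<^sup>2 * (cmod (cinner (u k) (u k)))\<^sup>2 = 0"
    using channel_quadratic_form_eq_0_imp[OF rank1_clinear u diagonal_Y[unfolded Y_def]]
    by (simp add: Y_def)
  moreover have "cinner (u k) (u k) = 1"
    using u by (simp add: cinner_self)
  ultimately have "cinner y (v k) = 0" by simp
  then show ?thesis by (metis cinner_commute complex_cnj_zero)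
qed

lemma mult_domain_orth_proj_eigenvector:
  fixes u v :: "nat \<Rightarrow> 'a::chilbert_space"
  assumes u: "\<forall>k. norm (u k) = 1" and v: "parseval_frame v"
    and P: "orth_proj P" and M: "P \<in> mult_domain (channel u v)" and "v k \<noteq> 0"
  shows "is_eigenvector P (v k)"
proof (cases "P (v k) = 0")
  case True
  then have "P (v k) = 0 *\<^sub>C v k" by simp
  then show ?thesis
    using \<open>v k \<noteq> 0\<close> unfolding is_eigenvector_def by blast
next
  case False
  have "P (v k) = v k"
  proof (rule orth_proj_fixes_if_orthogonal_to_kernel[OF P])
    show "cinner (v k) y = 0" if "P y = 0" for y
      using mult_domain_orth_proj_kernel_orthogonal[OF u v P M False that] .
  qed
  then have "P (v k) = 1 *\<^sub>C v k" by (simp add: scaleC_one)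
  then show ?thesis
    using \<open>v k \<noteq> 0\<close> unfolding is_eigenvector_def by blast
qed

lemma commute_if_parseval_frame_eigenvectors:
  assumes v: "parseval_frame v"
    and P: "clinear P" "bounded_linear P" and Q: "clinear Q" "bounded_linear Q"
    and eigen: "\<And>k. v k \<noteq> 0 \<Longrightarrow> is_eigenvector P (v k) \<and> is_eigenvector Q (v k)"
  shows "P \<circ> Q = Q \<circ> P"
proof
  have commute_on_frame: "P (Q (v k)) = Q (P (v k))" for k
  proof (cases "v k = 0")
    case True
    then show ?thesis by (simp add: clinear_zero P Q)
  next
    case False
    then obtain a b where "P (v k) = a *\<^sub>C v k" and "Q (v k) = b *\<^sub>C v k"
      using eigen unfolding is_eigenvector_def by blast
    then show ?thesis
      by (simp add: clinear_scaleC[OF P(1)] clinear_scaleC[OF Q(1)] scaleC_scaleC mult.commute)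
  qed
  have "bounded_linear (P \<circ> Q)" "bounded_linear (Q \<circ> P)"
    using bounded_linear_compose[OF P(2) Q(2)] bounded_linear_compose[OF Q(2) P(2)]
    by (simp_all add: comp_def)
  note sums = parseval_frame_apply_sums[OF v clinear_comp[OF P(1) Q(1)] this(1)]
    parseval_frame_apply_sums[OF v clinear_comp[OF Q(1) P(1)] this(2)]
  fix x
  show "(P \<circ> Q) x = (Q \<circ> P) x"
    using sums[of x] by (simp add: commute_on_frame sums_unique2)
qed

theorem proposition3p4:
  fixes u v :: "nat \<Rightarrow> 'a::chilbert_space"
  assumes "separable_type TYPE('a)"
    and "infinite_dimensional TYPE('a)"
    and "\<forall>k. norm (u k) = 1"
    and "\<forall>x. (\<lambda>k. rank1 (v k) (v k) x) sums x"
  shows "(\<forall>P. orth_proj P \<and> P \<in> mult_domain (channel u v) \<longrightarrow>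
            (\<forall>k. v k \<noteq> 0 \<longrightarrow> is_eigenvector P (v k)))
       \<and> (\<forall>P Q. orth_proj P \<and> orth_proj Q \<and> P \<in> mult_domain (channel u v)
            \<and> Q \<in> mult_domain (channel u v) \<longrightarrow> P \<circ> Q = Q \<circ> P)"
proof -
  have v: "parseval_frame v"
    using assms(4) by (simp add: parseval_frame_def)
  note eigenvector = mult_domain_orth_proj_eigenvector[OF assms(3) v]
  show ?thesis
  proof (intro conjI allI impI)
    show "is_eigenvector P (v k)"
      if "orth_proj P \<and> P \<in> mult_domain (channel u v)" and "v k \<noteq> 0" for P k
      using eigenvector that by blast
    show "P \<circ> Q = Q \<circ> P"
      if "orth_proj P \<and> orth_proj Q \<and> P \<in> mult_domain (channel u v)
            \<and> Q \<in> mult_domain (channel u v)" for P Q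
      using that
      by (intro commute_if_parseval_frame_eigenvectors[OF v] orth_proj_clinear
          orth_proj_bounded_linear conjI eigenvector) auto
  qed
qed

end
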